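(* Let $X$ be a Banach space and $f_k:X\to\mathbb{R}\cup\{+\infty\}$ $(k\in\mathbb{N}\cup\{0\})$ proper convex functions such that $C:=\operatorname{dom}f_0\cap\{x: f_k(x)\le0\ \forall k\in\mathbb{N}\}\neq\emptyset$. Let $\bar x\in X$ be a solution of problem (P): minimize $f_0(x)$ subject to $f_k(x)\le 0$ $(k\in\mathbb{N})$, and suppose the Slater condition holds: there exists $x\in\operatorname{dom}f_0$ with $\sup_{k\in\mathbb{N}}f_k(x)<0$. Then: (i) There exists a solution $(\lambda_1,\lambda_2,\ldots)\in\ell^1_+$, $\lambda_\infty\in\mathbb{R}_+$ of (D), i.e., $f_0(\bar x)=\inf_{x\in X}\big(f_0(x)+\overline{\sum_{k\in\mathbb{N}}}\lambda_kf_k(x)+\lambda_\infty f_\infty(x)\big)$. Moreover, for any solution of (D), this infimum is attained at $\bar x$, and $\lambda_kf_k(\bar x)=0$ for all $k\in\mathbb{N}\cup\{\infty\}$. (ii) For any $m=0,1,\ldots$, there exists a solution $(\lambda_1,\lambda_2,\ldots)\in\ell^\infty_+$ of (D$_m$), i.e., $f_0(\bar x)=\inf_{x\in X}\big(f_0(x)+\sum_{k=1}^m\lambda_kf_k(x)+\sum_{k=m+1}^{\infty}\lambda_kf_k^+(x)\big)$. Moreover, for any solution of (D$_m$), this infimum is attained at $\bar x$, and $\lambda_kf_k(\bar x)=0$ for $k=1,\ldots,m$.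
   Context: Conventions: $0\cdot(+\infty)=+\infty$, $(+\infty)-(+\infty)=+\infty$. $\ell^1_+$, $\ell^\infty_+$: nonnegative sequences in $\ell^1$, $\ell^\infty$. $f_\infty(x):=\limsup_{k\to\infty}f_k(x)$, $f_k^+:=\max\{f_k,0\}$, and $\overline{\sum_{k\in\mathbb{N}}}\lambda_kf_k(x):=\limsup_{n\to\infty}\sum_{k=1}^n\lambda_kf_k(x)$. (D) is the problem $\sup_{\lambda\in\ell^1_+,\lambda_\infty\ge0}\inf_{x\in X}\big(f_0(x)+\overline{\sum_{k\in\mathbb{N}}}\lambda_kf_k(x)+\lambda_\infty f_\infty(x)\big)$; (D$_m$) is $\sup_{\lambda\in\ell^\infty_+}\inf_{x\in X}\big(f_0(x)+\sum_{k=1}^m\lambda_kf_k(x)+\sum_{k=m+1}^\infty\lambda_kf_k^+(x)\big)$ (first sum zero if $m=0$). A solution of a dual problem is a point attaining its supremum; a solution of (P) is a feasible point minimizing $f_0$ over the feasible set. *)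

theory Defs
  imports "HOL-Analysis.Analysis" "HOL-Library.Extended_Real" "HOL-Library.Liminf_Limsup"
begin

text \<open>Functions X -> R \<union> {+inf} are modelled as ereal-valued functions never equal to -inf.
  The family f :: nat => 'a => ereal has f 0 the objective and f k (k >= 1) the constraints.\<close>

definition edom :: "('a \<Rightarrow> ereal) \<Rightarrow> 'a set" where
  "edom g = {x. g x \<noteq> \<infinity>}"

definition proper_convex :: "('a::real_vector \<Rightarrow> ereal) \<Rightarrow> bool" where
  "proper_convex g \<longleftrightarrow> (\<forall>x. g x \<noteq> -\<infinity>) \<and> (\<exists>x. g x \<noteq> \<infinity>) \<and>
     (\<forall>x y t. 0 < t \<longrightarrow> t < 1 \<longrightarrow>
        g (t *\<^sub>R x + (1 - t) *\<^sub>R y) \<le> ereal t * g x + ereal (1 - t) * g y)"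

text \<open>Multiplication with the convention 0 * (+inf) = +inf.\<close>
definition emult :: "real \<Rightarrow> ereal \<Rightarrow> ereal" where
  "emult l v = (if l = 0 then (if v = \<infinity> then \<infinity> else 0) else ereal l * v)"

definition feasibleP :: "(nat \<Rightarrow> 'a \<Rightarrow> ereal) \<Rightarrow> 'a \<Rightarrow> bool" where
  "feasibleP f x \<longleftrightarrow> (\<forall>k\<ge>1. f k x \<le> 0)"

definition solutionP :: "(nat \<Rightarrow> 'a \<Rightarrow> ereal) \<Rightarrow> 'a \<Rightarrow> bool" where
  "solutionP f x \<longleftrightarrow> feasibleP f x \<and> (\<forall>y. feasibleP f y \<longrightarrow> f 0 x \<le> f 0 y)"

definition finf :: "(nat \<Rightarrow> 'a \<Rightarrow> ereal) \<Rightarrow> 'a \<Rightarrow> ereal" where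
  "finf f x = limsup (\<lambda>k. f k x)"

text \<open>Lagrangian of (D); addition with the ereal convention (+inf) + (-inf) = +inf.\<close>
definition LagD :: "(nat \<Rightarrow> 'a \<Rightarrow> ereal) \<Rightarrow> (nat \<Rightarrow> real) \<Rightarrow> real \<Rightarrow> 'a \<Rightarrow> ereal" where
  "LagD f lam lami x = f 0 x + limsup (\<lambda>n. \<Sum>k\<in>{1..n}. emult (lam k) (f k x))
      + emult lami (finf f x)"

definition dualD :: "(nat \<Rightarrow> 'a \<Rightarrow> ereal) \<Rightarrow> (nat \<Rightarrow> real) \<Rightarrow> real \<Rightarrow> ereal" where
  "dualD f lam lami = (INF x. LagD f lam lami x)"

definition admD :: "(nat \<Rightarrow> real) \<Rightarrow> real \<Rightarrow> bool" where
  "admD lam lami \<longleftrightarrow> (\<forall>k\<ge>1. 0 \<le> lam k) \<and> summable lam \<and> 0 \<le> lami"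

definition solutionD :: "(nat \<Rightarrow> 'a \<Rightarrow> ereal) \<Rightarrow> (nat \<Rightarrow> real) \<Rightarrow> real \<Rightarrow> bool" where
  "solutionD f lam lami \<longleftrightarrow> admD lam lami \<and>
     (\<forall>mu mui. admD mu mui \<longrightarrow> dualD f mu mui \<le> dualD f lam lami)"

definition LagDm :: "(nat \<Rightarrow> 'a \<Rightarrow> ereal) \<Rightarrow> nat \<Rightarrow> (nat \<Rightarrow> real) \<Rightarrow> 'a \<Rightarrow> ereal" where
  "LagDm f m lam x = f 0 x + (\<Sum>k\<in>{1..m}. emult (lam k) (f k x))
      + (\<Sum>k. if m < k then emult (lam k) (max (f k x) 0) else 0)"

definition dualDm :: "(nat \<Rightarrow> 'a \<Rightarrow> ereal) \<Rightarrow> nat \<Rightarrow> (nat \<Rightarrow> real) \<Rightarrow> ereal" where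
  "dualDm f m lam = (INF x. LagDm f m lam x)"

definition admDm :: "(nat \<Rightarrow> real) \<Rightarrow> bool" where
  "admDm lam \<longleftrightarrow> (\<forall>k\<ge>1. 0 \<le> lam k) \<and> (\<exists>B. \<forall>k\<ge>1. lam k \<le> B)"

definition solutionDm :: "(nat \<Rightarrow> 'a \<Rightarrow> ereal) \<Rightarrow> nat \<Rightarrow> (nat \<Rightarrow> real) \<Rightarrow> bool" where
  "solutionDm f m lam \<longleftrightarrow> admDm lam \<and>
     (\<forall>mu. admDm mu \<longrightarrow> dualDm f m mu \<le> dualDm f m lam)"

end

theory Submission
  imports Defs
begin

text \<open>
  With finitely many constraints this is the classical Lagrange multiplier theorem: for a single
  constraint g with g x0 < 0 the multiplier is the least slope (F z - c) / (- g z) over strictly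
  feasible z, and convexity along the segment from an infeasible point to such a z shows that it
  also dominates the slopes (c - F y) / g y at infeasible points; further constraints are added
  one at a time. Replacing the tail f (N+1), f (N+2), ... by its supremum gives a system of N + 1
  constraints with the same feasible set as (P). For (D_m) take N = m and give every constraint
  beyond m a common multiplier that dominates the multiplier of the tail supremum. For (D) the
  Slater point bounds the total mass of the multipliers uniformly in N, so a subsequence converges
  coordinatewise; in the limit the multipliers of f 1, f 2, ... form a summable sequence, and the
  mass escaping to infinity becomes the multiplier of the limsup of the f k. Weak duality and
  complementary slackness only use the feasibility of xbar.
\<close>

section \<open>Convex functions with values in the extended reals\<close>

text \<open>Convexity for functions into the reals extended by +\<infinity> only; unlike
  proper_convex, the constant +\<infinity> is allowed.\<close>

definition convex_pinf :: "('a::real_vector \<Rightarrow> ereal) \<Rightarrow> bool" where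
  "convex_pinf g \<longleftrightarrow> (\<forall>x. g x \<noteq> -\<infinity>) \<and>
     (\<forall>x y t. 0 < t \<longrightarrow> t < 1 \<longrightarrow>
        g (t *\<^sub>R x + (1 - t) *\<^sub>R y) \<le> ereal t * g x + ereal (1 - t) * g y)"

lemma convex_pinf_nonminf: "convex_pinf g \<Longrightarrow> g x \<noteq> -\<infinity>"
  unfolding convex_pinf_def by blast

lemma convex_pinfD:
  "convex_pinf g \<Longrightarrow> 0 < t \<Longrightarrow> t < 1 \<Longrightarrow>
     g (t *\<^sub>R x + (1 - t) *\<^sub>R y) \<le> ereal t * g x + ereal (1 - t) * g y"
  unfolding convex_pinf_def by blast

lemma proper_convex_imp_convex_pinf: "proper_convex g \<Longrightarrow> convex_pinf g"
  unfolding proper_convex_def convex_pinf_def by blast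

lemma convex_pinf_zero: "convex_pinf (\<lambda>x. 0)"
  unfolding convex_pinf_def by simp

lemma convex_pinf_add:
  assumes f: "convex_pinf f" and g: "convex_pinf g"
  shows "convex_pinf (\<lambda>x. f x + g x)"
  unfolding convex_pinf_def
proof (intro conjI allI impI)
  show "f x + g x \<noteq> -\<infinity>" for x
    using convex_pinf_nonminf[OF f] convex_pinf_nonminf[OF g] by simp
  fix x y :: 'a and t :: real assume t: "0 < t" "t < 1"
  let ?w = "t *\<^sub>R x + (1 - t) *\<^sub>R y"
  have "f ?w + g ?w \<le> (ereal t * f x + ereal (1 - t) * f y) + (ereal t * g x + ereal (1 - t) * g y)"
    using t by (intro add_mono convex_pinfD[OF f] convex_pinfD[OF g])
  also have "\<dots> = (ereal t * f x + ereal t * g x) + (ereal (1 - t) * f y + ereal (1 - t) * g y)"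
    by (simp add: ac_simps)
  also have "\<dots> = ereal t * (f x + g x) + ereal (1 - t) * (f y + g y)"
    using convex_pinf_nonminf[OF f] convex_pinf_nonminf[OF g] by (simp add: ereal_distrib_left)
  finally show "f ?w + g ?w \<le> ereal t * (f x + g x) + ereal (1 - t) * (f y + g y)" .
qed

lemma convex_pinf_sum:
  "(\<And>i. i \<in> A \<Longrightarrow> convex_pinf (g i)) \<Longrightarrow> convex_pinf (\<lambda>x. \<Sum>i\<in>A. g i x)"
proof (induction A rule: infinite_finite_induct)
  case (insert i A)
  then show ?case by (simp add: convex_pinf_add)
qed (simp_all add: convex_pinf_zero)

lemma convex_pinf_SUP:
  fixes g :: "'i \<Rightarrow> 'a::real_vector \<Rightarrow> ereal"
  assumes "I \<noteq> {}" and g: "\<And>i. i \<in> I \<Longrightarrow> convex_pinf (g i)"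
  shows "convex_pinf (\<lambda>x. SUP i\<in>I. g i x)"
  unfolding convex_pinf_def
proof (intro conjI allI impI)
  fix x
  obtain i where "i \<in> I" using assms(1) by blast
  then have "g i x \<le> (SUP i\<in>I. g i x)" by (rule SUP_upper)
  then show "(SUP i\<in>I. g i x) \<noteq> -\<infinity>" using convex_pinf_nonminf[OF g[OF \<open>i \<in> I\<close>]] by auto
next
  fix x y :: 'a and t :: real assume t: "0 < t" "t < 1"
  show "(SUP i\<in>I. g i (t *\<^sub>R x + (1 - t) *\<^sub>R y))
      \<le> ereal t * (SUP i\<in>I. g i x) + ereal (1 - t) * (SUP i\<in>I. g i y)"
  proof (rule SUP_least)
    fix i assume i: "i \<in> I"
    have "g i (t *\<^sub>R x + (1 - t) *\<^sub>R y) \<le> ereal t * g i x + ereal (1 - t) * g i y"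
      using g[OF i] t by (rule convex_pinfD)
    also have "\<dots> \<le> ereal t * (SUP i\<in>I. g i x) + ereal (1 - t) * (SUP i\<in>I. g i y)"
      using t i by (intro add_mono ereal_mult_left_mono SUP_upper) auto
    finally show "g i (t *\<^sub>R x + (1 - t) *\<^sub>R y)
        \<le> ereal t * (SUP i\<in>I. g i x) + ereal (1 - t) * (SUP i\<in>I. g i y)" .
  qed
qed

lemma convex_pinf_restrict:
  assumes F: "convex_pinf F" and g: "convex_pinf g"
  shows "convex_pinf (\<lambda>x. if g x \<le> 0 then F x else \<infinity>)"
  unfolding convex_pinf_def
proof (intro conjI allI impI)
  show "(if g x \<le> 0 then F x else \<infinity>) \<noteq> -\<infinity>" for x
    using convex_pinf_nonminf[OF F] by simp
  fix x y :: 'a and t :: real assume t: "0 < t" "t < 1"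
  let ?w = "t *\<^sub>R x + (1 - t) *\<^sub>R y"
  let ?F = "\<lambda>x. if g x \<le> 0 then F x else \<infinity>"
  show "?F ?w \<le> ereal t * ?F x + ereal (1 - t) * ?F y"
  proof (cases "g x \<le> 0 \<and> g y \<le> 0")
    case True
    have "g ?w \<le> ereal t * g x + ereal (1 - t) * g y" using g t by (rule convex_pinfD)
    also have "\<dots> \<le> 0" using True t
      by (intro add_nonpos_nonpos) (cases "g x"; cases "g y"; auto simp: mult_nonneg_nonpos)+
    finally show ?thesis using True convex_pinfD[OF F t] by auto
  next
    case False
    then show ?thesis using t convex_pinf_nonminf[OF F, of x] convex_pinf_nonminf[OF F, of y] by auto
  qed
qed

lemma emult_ereal [simp]: "emult l (ereal r) = ereal (l * r)"
  by (simp add: emult_def)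

lemma emult_pinf: "0 \<le> l \<Longrightarrow> emult l \<infinity> = \<infinity>"
  by (simp add: emult_def)

lemma emult_pos: "0 < l \<Longrightarrow> emult l v = ereal l * v"
  by (simp add: emult_def)

lemma emult_nonminf: "0 \<le> l \<Longrightarrow> v \<noteq> -\<infinity> \<Longrightarrow> emult l v \<noteq> -\<infinity>"
  by (cases v) (auto simp: emult_def)

lemma emult_nonpos: "0 \<le> l \<Longrightarrow> v \<le> 0 \<Longrightarrow> emult l v \<le> 0"
  by (cases v) (auto simp: emult_def mult_nonneg_nonpos)

lemma emult_le_ereal: "0 \<le> l \<Longrightarrow> v \<le> ereal r \<Longrightarrow> v \<noteq> -\<infinity> \<Longrightarrow> emult l v \<le> ereal (l * r)"
  by (cases v) (auto simp: mult_left_mono)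

lemma emult_le_ereal_mult:
  assumes \<mu>: "0 \<le> \<mu>" "\<mu> \<le> L" and L: "0 < L" and w: "v \<le> w" "0 \<le> w"
  shows "emult \<mu> v \<le> ereal L * w"
proof (cases v)
  case (real r)
  show ?thesis
  proof (cases w)
    case (real s)
    have "\<mu> * r \<le> \<mu> * s" using \<open>v = ereal r\<close> real w \<mu> by (simp add: mult_left_mono)
    also have "\<dots> \<le> L * s" using real w \<mu> by (simp add: mult_right_mono)
    finally show ?thesis using \<open>v = ereal r\<close> real by simp
  qed (use w L in auto)
next
  case PInf
  then show ?thesis using w L by auto
next
  case MInf
  then have "emult \<mu> v \<le> 0" using \<mu> by (simp add: emult_nonpos)
  also have "0 \<le> ereal L * w" using w L by simp
  finally show ?thesis .
qed

lemma convex_pinf_emult: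
  assumes g: "convex_pinf g" and l: "0 \<le> l"
  shows "convex_pinf (\<lambda>x. emult l (g x))"
proof (cases "l = 0")
  case True
  show ?thesis unfolding convex_pinf_def
  proof (intro conjI allI impI)
    show "emult l (g x) \<noteq> -\<infinity>" for x using convex_pinf_nonminf[OF g] True by (simp add: emult_nonminf)
    fix x y :: 'a and t :: real assume t: "0 < t" "t < 1"
    show "emult l (g (t *\<^sub>R x + (1 - t) *\<^sub>R y))
        \<le> ereal t * emult l (g x) + ereal (1 - t) * emult l (g y)"
    proof (cases "g x = \<infinity> \<or> g y = \<infinity>")
      case True
      then show ?thesis using t \<open>l = 0\<close> by (auto simp: emult_def)
    next
      case False
      then obtain a b where "g x = ereal a" "g y = ereal b"
        using convex_pinf_nonminf[OF g, of x] convex_pinf_nonminf[OF g, of y]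
        by (cases "g x"; cases "g y") auto
      then have "g (t *\<^sub>R x + (1 - t) *\<^sub>R y) \<noteq> \<infinity>"
        using convex_pinfD[OF g t, of x y] by auto
      then show ?thesis using False \<open>l = 0\<close> by (simp add: emult_def)
    qed
  qed
next
  case False
  then have l: "l > 0" using l by simp
  show ?thesis unfolding convex_pinf_def
  proof (intro conjI allI impI)
    show "emult l (g x) \<noteq> -\<infinity>" for x using convex_pinf_nonminf[OF g] l by (simp add: emult_nonminf)
    fix x y :: 'a and t :: real assume t: "0 < t" "t < 1"
    have "ereal l * g (t *\<^sub>R x + (1 - t) *\<^sub>R y) \<le> ereal l * (ereal t * g x + ereal (1 - t) * g y)"
      using convex_pinfD[OF g t] l by (intro ereal_mult_left_mono) auto
    also have "\<dots> = ereal t * (ereal l * g x) + ereal (1 - t) * (ereal l * g y)"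
      using convex_pinf_nonminf[OF g, of x] convex_pinf_nonminf[OF g, of y] t l
      by (subst ereal_distrib_left) (auto simp: ac_simps ereal_mult_eq_MInfty)
    finally show "emult l (g (t *\<^sub>R x + (1 - t) *\<^sub>R y))
        \<le> ereal t * emult l (g x) + ereal (1 - t) * emult l (g y)"
      using l by (simp add: emult_pos)
  qed
qed

section \<open>Lagrange multipliers for finitely many constraints\<close>

lemma convex_pinf_slope_le:
  fixes F g :: "'a::real_vector \<Rightarrow> ereal"
  assumes F: "convex_pinf F" and g: "convex_pinf g"
    and feas: "\<And>x. g x \<le> 0 \<Longrightarrow> ereal c \<le> F x"
    and y: "F y = ereal Fy" "g y = ereal gy" "0 < gy"
    and z: "F z = ereal Fz" "g z = ereal gz" "gz < 0"
  shows "(c - Fy) / gy \<le> (Fz - c) / - gz"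
proof -
  \<comment> \<open>on the segment from y to z, the chord of g vanishes at w, so w is feasible\<close>
  define t where "t = - gz / (gy - gz)"
  have t: "0 < t" "t < 1" using y z by (auto simp: t_def divide_simps)
  have t_gy: "t * (gy - gz) = - gz" and t_gz: "(1 - t) * (gy - gz) = gy"
    using y z by (simp_all add: t_def divide_simps)
  define w where "w = t *\<^sub>R y + (1 - t) *\<^sub>R z"
  have "g w \<le> ereal (t * gy + (1 - t) * gz)"
    using convex_pinfD[OF g t, of y z] y z by (simp add: w_def)
  also have "t * gy + (1 - t) * gz = 0"
    using t_gy t_gz y z by (simp add: algebra_simps)
  finally have "ereal c \<le> F w" using feas by (simp add: zero_ereal_def)
  also have "F w \<le> ereal (t * Fy + (1 - t) * Fz)"
    using convex_pinfD[OF F t, of y z] y z by (simp add: w_def)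
  finally have "c * (gy - gz) \<le> (t * Fy + (1 - t) * Fz) * (gy - gz)"
    using y z by (simp add: mult_right_mono)
  also have "\<dots> = (t * (gy - gz)) * Fy + ((1 - t) * (gy - gz)) * Fz"
    by (simp add: algebra_simps)
  also have "\<dots> = - gz * Fy + gy * Fz"
    unfolding t_gy t_gz ..
  finally have "(c - Fy) * - gz \<le> (Fz - c) * gy" by (simp add: algebra_simps)
  then show ?thesis using y z by (simp add: divide_simps) (simp add: algebra_simps)
qed

lemma le_add_emult_from_slopes:
  assumes \<mu>: "0 \<le> \<mu>" and u: "u \<noteq> -\<infinity>" and v: "v \<noteq> -\<infinity>"
    and feas: "v \<le> 0 \<Longrightarrow> ereal c \<le> u"
    and le: "\<And>a b. u = ereal a \<Longrightarrow> v = ereal b \<Longrightarrow> b < 0 \<Longrightarrow> \<mu> \<le> (a - c) / - b"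
    and ge: "\<And>a b. u = ereal a \<Longrightarrow> v = ereal b \<Longrightarrow> 0 < b \<Longrightarrow> (c - a) / b \<le> \<mu>"
  shows "ereal c \<le> u + emult \<mu> v"
proof (cases u)
  case (real a)
  show ?thesis
  proof (cases v)
    case (real b)
    have "c \<le> a + \<mu> * b"
    proof (cases b "0::real" rule: linorder_cases)
      case less
      then show ?thesis using le[OF \<open>u = ereal a\<close> real less] by (simp add: divide_simps algebra_simps)
    next
      case equal
      then show ?thesis using feas \<open>u = ereal a\<close> real by (simp add: zero_ereal_def)
    next
      case greater
      then show ?thesis using ge[OF \<open>u = ereal a\<close> real greater] by (simp add: divide_simps algebra_simps)
    qed
    then show ?thesis using \<open>u = ereal a\<close> real by simp
  qed (use v \<mu> \<open>u = ereal a\<close> in \<open>auto simp: emult_pinf\<close>)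
qed (use u in auto)

lemma lagrange_multiplier_single:
  fixes F g :: "'a::real_vector \<Rightarrow> ereal"
  assumes F: "convex_pinf F" and g: "convex_pinf g"
    and slater: "F x0 \<noteq> \<infinity>" "g x0 < 0"
    and feas: "\<And>x. g x \<le> 0 \<Longrightarrow> ereal c \<le> F x"
  shows "\<exists>\<mu>\<ge>0. \<forall>x. ereal c \<le> F x + emult \<mu> (g x)"
proof -
  \<comment> \<open>the multiplier is the least slope of F - c against -g over strictly feasible points\<close>
  define Z where "Z = {(a - c) / - b | z a b. F z = ereal a \<and> g z = ereal b \<and> b < 0}"
  obtain a0 b0 where "F x0 = ereal a0" "g x0 = ereal b0" "b0 < 0"
    using slater convex_pinf_nonminf[OF F, of x0] convex_pinf_nonminf[OF g, of x0]
    by (cases "F x0"; cases "g x0") auto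
  then have Z_ne: "Z \<noteq> {}" unfolding Z_def by blast
  have Z_nonneg: "0 \<le> v" if "v \<in> Z" for v
  proof -
    obtain z a b where z: "F z = ereal a" "g z = ereal b" "b < 0" "v = (a - c) / - b"
      using \<open>v \<in> Z\<close> unfolding Z_def by blast
    then have "c \<le> a" using feas[of z] by (simp add: zero_ereal_def)
    then show ?thesis using z by (simp add: divide_nonneg_neg)
  qed
  define \<mu> where "\<mu> = Inf Z"
  have "0 \<le> \<mu>" unfolding \<mu>_def using Z_ne Z_nonneg by (intro cInf_greatest) auto
  moreover have "ereal c \<le> F x + emult \<mu> (g x)" for x
  proof (rule le_add_emult_from_slopes)
    show "\<mu> \<le> (a - c) / - b" if "F x = ereal a" "g x = ereal b" "b < 0" for a b
      unfolding \<mu>_def using Z_nonneg that by (intro cInf_lower bdd_belowI) (auto simp: Z_def)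
    show "(c - a) / b \<le> \<mu>" if y: "F x = ereal a" "g x = ereal b" "0 < b" for a b
      unfolding \<mu>_def using Z_ne
    proof (rule cInf_greatest)
      fix v assume "v \<in> Z"
      then obtain z a' b' where z: "F z = ereal a'" "g z = ereal b'" "b' < 0" "v = (a' - c) / - b'"
        unfolding Z_def by blast
      show "(c - a) / b \<le> v"
        unfolding z(4) using F g feas y z(1-3) by (rule convex_pinf_slope_le)
    qed
  qed (use \<open>0 \<le> \<mu>\<close> feas convex_pinf_nonminf[OF F] convex_pinf_nonminf[OF g] in auto)
  ultimately show ?thesis by blast
qed

lemma lagrange_multipliers_finite:
  fixes g :: "nat \<Rightarrow> 'a::real_vector \<Rightarrow> ereal"
  assumes g: "\<And>i. i < n \<Longrightarrow> convex_pinf (g i)" and slater_g: "\<And>i. i < n \<Longrightarrow> g i x0 < 0"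
    and F: "convex_pinf F" and slater_F: "F x0 \<noteq> \<infinity>"
    and feas: "\<And>x. (\<forall>i<n. g i x \<le> 0) \<Longrightarrow> ereal c \<le> F x"
  shows "\<exists>\<mu>. (\<forall>i. 0 \<le> \<mu> i) \<and> (\<forall>x. ereal c \<le> F x + (\<Sum>i<n. emult (\<mu> i) (g i x)))"
  using g slater_g F slater_F feas
proof (induction n arbitrary: F)
  case 0
  then show ?case by (intro exI[of _ "\<lambda>_. 0"]) auto
next
  case (Suc n F)
  have g: "convex_pinf (g i)" and slater_g: "g i x0 < 0" if "i \<le> n" for i
    using Suc.prems(1,2) that by auto
  \<comment> \<open>treat the constraint g n as part of the objective, then dualize it last\<close>
  define F' where "F' x = (if g n x \<le> 0 then F x else \<infinity>)" for x
  have F': "convex_pinf F'" unfolding F'_def using Suc.prems(3) g by (intro convex_pinf_restrict) auto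
  have F'_x0: "F' x0 \<noteq> \<infinity>" using Suc.prems(4) slater_g[OF order.refl] by (simp add: F'_def)
  have F'_feas: "ereal c \<le> F' x" if "\<forall>i<n. g i x \<le> 0" for x
    using that Suc.prems(5)[of x] by (auto simp: F'_def less_Suc_eq)
  obtain \<mu> where \<mu>: "\<forall>i. 0 \<le> \<mu> i" "\<forall>x. ereal c \<le> F' x + (\<Sum>i<n. emult (\<mu> i) (g i x))"
    using Suc.IH[OF _ _ F' F'_x0 F'_feas] g slater_g by (meson less_imp_le)
  define G where "G x = F x + (\<Sum>i<n. emult (\<mu> i) (g i x))" for x
  have G: "convex_pinf G" unfolding G_def
    using Suc.prems(3) g \<mu>(1) by (intro convex_pinf_add convex_pinf_sum convex_pinf_emult) auto
  have G_x0: "G x0 \<noteq> \<infinity>"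
  proof -
    have "emult (\<mu> i) (g i x0) \<noteq> \<infinity>" if "i < n" for i
      using slater_g[OF less_imp_le[OF that]] \<mu>(1)[rule_format, of i] by (cases "g i x0") (auto simp: emult_def)
    then show ?thesis using Suc.prems(4) by (simp add: G_def sum_Pinfty)
  qed
  have G_feas: "ereal c \<le> G x" if "g n x \<le> 0" for x
    using \<mu>(2)[rule_format, of x] that by (simp add: G_def F'_def)
  obtain m where m: "0 \<le> m" "\<forall>x. ereal c \<le> G x + emult m (g n x)"
    using lagrange_multiplier_single[OF G g[OF order.refl] G_x0 slater_g[OF order.refl] G_feas] by auto
  show ?case
  proof (intro exI[of _ "\<mu>(n := m)"] conjI allI)
    show "0 \<le> (\<mu>(n := m)) i" for i using \<mu>(1) m(1) by simp
    show "ereal c \<le> F x + (\<Sum>i<Suc n. emult ((\<mu>(n := m)) i) (g i x))" for x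
      using m(2) by (simp add: G_def add.assoc)
  qed
qed

lemma ereal_add_nonpos_eq_self:
  fixes a b :: ereal
  assumes "ereal c + a + b = ereal c" "a \<le> 0" "b \<le> 0"
  shows "a = 0" "b = 0"
  using assms by (cases a; cases b; simp)+

lemma ereal_sum_nonpos_eq_0:
  fixes t :: "'i \<Rightarrow> ereal"
  assumes "finite A" and nonpos: "\<And>i. i \<in> A \<Longrightarrow> t i \<le> 0" and "sum t A = 0" and i: "i \<in> A"
  shows "t i = 0"
proof -
  have "0 = t i + (\<Sum>j\<in>A - {i}. t j)" using assms by (simp add: sum.remove)
  also have "\<dots> \<le> t i + 0" using nonpos by (intro add_mono sum_nonpos) auto
  finally show ?thesis using nonpos[OF i] by simp
qed

lemma limsup_partial_sums_nonpos_eq_0: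
  fixes t :: "nat \<Rightarrow> ereal"
  assumes nonpos: "\<And>k. 1 \<le> k \<Longrightarrow> t k \<le> 0"
    and lim: "limsup (\<lambda>n. \<Sum>k\<in>{1..n}. t k) = 0" and k: "1 \<le> k"
  shows "t k = 0"
proof -
  define S where "S = (\<lambda>n. \<Sum>k\<in>{1..n}. t k)"
  have "decseq S"
    unfolding S_def using nonpos by (intro decseq_SucI) (simp add: add_decreasing2)
  then have "limsup S = (INF n. S n)"
    by (rule lim_imp_Limsup[OF trivial_limit_sequentially LIMSEQ_INF])
  then have "(INF n. S n) = 0" using lim by (simp add: S_def)
  then have "0 \<le> S k" by (metis INF_lower UNIV_I)
  moreover have "S k \<le> 0" unfolding S_def using nonpos by (intro sum_nonpos) auto
  ultimately have "sum t {1..k} = 0" unfolding S_def by simp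
  with nonpos k show ?thesis by (intro ereal_sum_nonpos_eq_0[of "{1..k}" t]) auto
qed

lemma pointwise_convergent_subseq:
  fixes w :: "nat \<Rightarrow> nat \<Rightarrow> 'b::metric_space"
  assumes w: "\<And>N k. w N k \<in> S k" and S: "\<And>k. compact (S k)"
  obtains l r where "strict_mono r" "\<And>k. l k \<in> S k" "\<And>k. (\<lambda>j. w (r j) k) \<longlonglongrightarrow> l k"
proof -
  have "compact (PiE UNIV S)"
    using compactin_PiE[of "\<lambda>_. euclidean" UNIV S] S by (simp add: euclidean_product_topology)
  moreover have "\<forall>N. w N \<in> PiE UNIV S" using w by auto
  ultimately obtain l r where l: "l \<in> PiE UNIV S" and r: "strict_mono r" and lim: "(w \<circ> r) \<longlonglongrightarrow> l"
    using compact_imp_seq_compact seq_compactE by metis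
  have "(\<lambda>j. w (r j) k) \<longlonglongrightarrow> l k" for k
    using continuous_on_tendsto_compose[OF continuous_on_product_coordinates lim, of k] by (simp add: o_def)
  with l show ?thesis using that[OF r] by (auto simp: PiE_iff)
qed

lemma sum_truncate_le:
  fixes \<mu> a :: "nat \<Rightarrow> real"
  assumes "\<And>i. 0 \<le> \<mu> i" "K \<le> N" "\<And>i. K \<le> i \<Longrightarrow> i \<le> N \<Longrightarrow> a i \<le> \<beta>"
  shows "(\<Sum>i<Suc N. \<mu> i * a i) \<le> (\<Sum>i<K. \<mu> i * a i) + (\<Sum>i\<in>{K..N}. \<mu> i) * \<beta>"
proof -
  have "{..<Suc N} = {..<K} \<union> {K..N}" using assms(2) by auto
  then have "(\<Sum>i<Suc N. \<mu> i * a i) = (\<Sum>i<K. \<mu> i * a i) + (\<Sum>i\<in>{K..N}. \<mu> i * a i)"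
    by (simp add: sum.union_disjoint ivl_disj_int)
  also have "(\<Sum>i\<in>{K..N}. \<mu> i * a i) \<le> (\<Sum>i\<in>{K..N}. \<mu> i * \<beta>)"
    using assms by (intro sum_mono mult_left_mono) auto
  finally show ?thesis by (simp add: sum_distrib_right)
qed

lemma limsup_lower_bound_tail:
  fixes lam a b :: "nat \<Rightarrow> real"
  assumes lam: "\<And>k. 0 \<le> lam k" "lam 0 = 0" "summable lam" and b: "\<And>K. b K \<le> B"
    and ineq: "\<And>K. c \<le> (\<Sum>k\<in>{1..K}. lam k * a k) + (lami + (suminf lam - (\<Sum>k\<in>{1..K}. lam k))) * b K"
  shows "ereal c \<le> limsup (\<lambda>K. ereal (\<Sum>k\<in>{1..K}. lam k * a k)) + limsup (\<lambda>K. ereal (lami * b K))"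
proof -
  define tail where "tail K = suminf lam - (\<Sum>k\<in>{1..K}. lam k)" for K
  have partial: "(\<Sum>k\<in>{1..K}. lam k) = (\<Sum>k<Suc K. lam k)" for K
    unfolding One_nat_def sum.atLeast1_atMost_eq sum.lessThan_Suc_shift lam(2) by simp
  have tail_nonneg: "0 \<le> tail K" for K
  proof -
    have "(\<Sum>k<Suc K. lam k) \<le> suminf lam" using lam by (intro sum_le_suminf) auto
    then show ?thesis unfolding tail_def partial by linarith
  qed
  have "(\<lambda>K. \<Sum>k<Suc K. lam k) \<longlonglongrightarrow> suminf lam"
    using summable_LIMSEQ[OF lam(3)] by (rule LIMSEQ_Suc)
  from tendsto_diff[OF tendsto_const this, of "suminf lam"] have "tail \<longlonglongrightarrow> 0"
    unfolding tail_def partial by simp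
  then have "(\<lambda>K. c - tail K * B) \<longlonglongrightarrow> c - 0 * B"
    by (intro tendsto_intros)
  then have "(\<lambda>K. ereal (c - tail K * B)) \<longlonglongrightarrow> ereal c"
    by simp
  from lim_imp_Limsup[OF trivial_limit_sequentially this]
  have "ereal c = limsup (\<lambda>K. ereal (c - tail K * B))" by simp
  also have "\<dots> \<le> limsup (\<lambda>K. ereal (\<Sum>k\<in>{1..K}. lam k * a k) + ereal (lami * b K))"
  proof (intro Limsup_mono always_eventually allI)
    fix K
    have "tail K * b K \<le> tail K * B" using b tail_nonneg by (rule mult_left_mono)
    then show "ereal (c - tail K * B) \<le> ereal (\<Sum>k\<in>{1..K}. lam k * a k) + ereal (lami * b K)"
      using ineq[of K] unfolding tail_def[symmetric] by (simp add: algebra_simps)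
  qed
  also have "\<dots> \<le> limsup (\<lambda>K. ereal (\<Sum>k\<in>{1..K}. lam k * a k)) + limsup (\<lambda>K. ereal (lami * b K))"
    by (rule ereal_limsup_add_mono)
  finally show ?thesis .
qed

text \<open>Coordinate 0 is the total mass of \<mu> 0, ..., \<mu> N and coordinate i + 1 is \<mu> i for
  i < N; the last multiplier \<mu> N (that of the tail supremum below) only enters the total.\<close>

definition mass_vector :: "nat \<Rightarrow> (nat \<Rightarrow> real) \<Rightarrow> nat \<Rightarrow> real" where
  "mass_vector N \<mu> k = (case k of 0 \<Rightarrow> \<Sum>i<Suc N. \<mu> i | Suc i \<Rightarrow> if i < N then \<mu> i else 0)"

lemma mass_vector_bounds:
  assumes "\<And>i. 0 \<le> \<mu> i"
  shows "0 \<le> mass_vector N \<mu> k" and "mass_vector N \<mu> k \<le> (\<Sum>i<Suc N. \<mu> i)"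
proof -
  have "\<mu> i \<le> (\<Sum>i<Suc N. \<mu> i)" if "i < N" for i
    using that assms by (intro member_le_sum) auto
  then show "0 \<le> mass_vector N \<mu> k" "mass_vector N \<mu> k \<le> (\<Sum>i<Suc N. \<mu> i)"
    using assms by (auto simp: mass_vector_def sum_nonneg split: nat.split)
qed

lemma mass_vector_partial_le:
  assumes "\<And>i. 0 \<le> \<mu> i"
  shows "(\<Sum>i<K. mass_vector N \<mu> (Suc i)) \<le> mass_vector N \<mu> 0"
proof -
  have "(\<Sum>i<K. mass_vector N \<mu> (Suc i)) = (\<Sum>i\<in>{..<K} \<inter> {..<N}. \<mu> i)"
    by (simp add: mass_vector_def sum.inter_restrict)
  also have "\<dots> \<le> (\<Sum>i<Suc N. \<mu> i)" using assms by (intro sum_mono2) auto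
  finally show ?thesis by (simp add: mass_vector_def)
qed

lemma mass_vector_split:
  assumes "K \<le> N"
  shows "(\<Sum>i<K. mass_vector N \<mu> (Suc i) * c i) = (\<Sum>i<K. \<mu> i * c i)"
    and "mass_vector N \<mu> 0 - (\<Sum>i<K. mass_vector N \<mu> (Suc i)) = (\<Sum>i\<in>{K..N}. \<mu> i)"
proof -
  show partial: "(\<Sum>i<K. mass_vector N \<mu> (Suc i) * c i) = (\<Sum>i<K. \<mu> i * c i)" for c
    using assms by (intro sum.cong) (auto simp: mass_vector_def)
  have "{..<Suc N} = {..<K} \<union> {K..N}" using assms by auto
  then have "mass_vector N \<mu> 0 = (\<Sum>i<K. \<mu> i) + (\<Sum>i\<in>{K..N}. \<mu> i)"
    by (simp add: mass_vector_def sum.union_disjoint ivl_disj_int)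
  then show "mass_vector N \<mu> 0 - (\<Sum>i<K. mass_vector N \<mu> (Suc i)) = (\<Sum>i\<in>{K..N}. \<mu> i)"
    using partial[of "\<lambda>_. 1"] by simp
qed

section \<open>Convex programs satisfying the Slater condition\<close>

locale slater_program =
  fixes f :: "nat \<Rightarrow> 'a::real_vector \<Rightarrow> ereal" and xbar :: 'a
  assumes proper: "\<And>k. proper_convex (f k)"
    and solution: "solutionP f xbar"
    and slater: "\<exists>x\<in>edom (f 0). (SUP k\<in>{1..}. f k x) < 0"
begin

lemma convex_f: "convex_pinf (f k)"
  using proper by (rule proper_convex_imp_convex_pinf)

lemma f_nonminf: "f k x \<noteq> -\<infinity>"
  using convex_f by (rule convex_pinf_nonminf)

lemma feasible_xbar: "1 \<le> k \<Longrightarrow> f k xbar \<le> 0"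
  using solution unfolding solutionP_def feasibleP_def by blast

lemma slater_point:
  obtains x0 \<delta> where "f 0 x0 \<noteq> \<infinity>" "0 < \<delta>" "\<And>k. 1 \<le> k \<Longrightarrow> f k x0 \<le> ereal (- \<delta>)"
proof -
  obtain x0 where x0: "f 0 x0 \<noteq> \<infinity>" "(SUP k\<in>{1..}. f k x0) < 0"
    using slater unfolding edom_def by blast
  have f_le: "f k x0 \<le> (SUP k\<in>{1..}. f k x0)" if "1 \<le> k" for k
    using that by (intro SUP_upper) auto
  then have "(SUP k\<in>{1..}. f k x0) \<noteq> -\<infinity>" using f_nonminf[of 1 x0] by force
  then obtain s where "(SUP k\<in>{1..}. f k x0) = ereal s" "s < 0"
    using x0(2) by (cases "SUP k\<in>{1..}. f k x0") auto
  then show ?thesis using that[OF x0(1), of "- s"] f_le by auto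
qed

definition optval :: real where
  "optval = real_of_ereal (f 0 xbar)"

lemma optval_le: "feasibleP f x \<Longrightarrow> ereal optval \<le> f 0 x"
  and f0_xbar: "f 0 xbar = ereal optval"
proof -
  obtain x0 \<delta> where x0: "f 0 x0 \<noteq> \<infinity>" "0 < \<delta>" "\<And>k. 1 \<le> k \<Longrightarrow> f k x0 \<le> ereal (- \<delta>)"
    using slater_point by blast
  have "feasibleP f x0" unfolding feasibleP_def using x0 order.trans by fastforce
  then have "f 0 xbar \<le> f 0 x0" using solution unfolding solutionP_def by blast
  then have "f 0 xbar \<noteq> \<infinity>" using x0(1) by auto
  then show f0_xbar: "f 0 xbar = ereal optval"
    using f_nonminf[of 0 xbar] unfolding optval_def by (cases "f 0 xbar") auto
  show "ereal optval \<le> f 0 x" if "feasibleP f x"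
    using solution that unfolding solutionP_def f0_xbar by blast
qed

definition tail_sup :: "nat \<Rightarrow> 'a \<Rightarrow> ereal" where
  "tail_sup N x = (SUP k\<in>{N<..}. f k x)"

lemma f_le_tail_sup: "N < k \<Longrightarrow> f k x \<le> tail_sup N x"
  unfolding tail_sup_def by (auto intro: SUP_upper)

lemma tail_sup_le: "(\<And>k. 1 \<le> k \<Longrightarrow> f k x \<le> b) \<Longrightarrow> tail_sup N x \<le> b"
  unfolding tail_sup_def by (auto intro: SUP_least)

lemma tail_sup_nonminf: "tail_sup N x \<noteq> -\<infinity>"
  using f_le_tail_sup[of N "Suc N" x] f_nonminf[of "Suc N" x] by auto

lemma tail_sup_antimono: "K \<le> N \<Longrightarrow> tail_sup N x \<le> tail_sup K x"
  unfolding tail_sup_def by (rule SUP_subset_mono) auto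

lemma convex_tail_sup: "convex_pinf (tail_sup N)"
  unfolding tail_sup_def[abs_def] using convex_f by (intro convex_pinf_SUP) auto

lemma finf_eq_INF_tail_sup: "finf f x = (INF N. tail_sup N x)"
proof -
  have "finf f x = (INF n. SUP k\<in>{n..}. f k x)" unfolding finf_def by (rule limsup_INF_SUP)
  also have "\<dots> = (INF N. SUP k\<in>{Suc N..}. f k x)"
  proof (intro antisym INF_mono)
    show "\<exists>n\<in>UNIV. (SUP k\<in>{n..}. f k x) \<le> (SUP k\<in>{Suc N..}. f k x)" for N
      by blast
    show "\<exists>n\<in>UNIV. (SUP k\<in>{Suc n..}. f k x) \<le> (SUP k\<in>{N..}. f k x)" for N
      by (intro bexI[of _ N] SUP_subset_mono) auto
  qed
  finally show ?thesis by (simp add: tail_sup_def atLeast_Suc_greaterThan)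
qed

lemma tail_sup_tendsto_finf: "(\<lambda>N. tail_sup N x) \<longlonglongrightarrow> finf f x"
  unfolding finf_eq_INF_tail_sup
  by (rule LIMSEQ_INF) (simp add: decseq_SucI tail_sup_antimono)

lemma tail_sup_pinf:
  assumes "tail_sup 0 x = \<infinity>" and "\<And>k. 1 \<le> k \<Longrightarrow> f k x \<noteq> \<infinity>"
  shows "tail_sup N x = \<infinity>"
proof -
  have "{0<..} = {1..N} \<union> {N<..}" by auto
  then have "tail_sup 0 x = sup (SUP k\<in>{1..N}. f k x) (tail_sup N x)"
    unfolding tail_sup_def by (simp add: SUP_union)
  moreover have "(SUP k\<in>{1..N}. f k x) < \<infinity>"
  proof (cases "N = 0")
    case False
    then show ?thesis using assms(2) by (subst finite_Sup_less_iff) (auto simp: less_top)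
  qed (simp add: bot_ereal_def)
  ultimately show ?thesis using assms(1) by (auto simp: sup_ereal_def max_def split: if_splits)
qed

lemma finite_values:
  assumes "tail_sup 0 x \<noteq> \<infinity>"
  shows "\<bar>tail_sup N x\<bar> \<noteq> \<infinity>" and "1 \<le> k \<Longrightarrow> \<bar>f k x\<bar> \<noteq> \<infinity>"
proof -
  show "\<bar>tail_sup N x\<bar> \<noteq> \<infinity>"
    using tail_sup_antimono[of 0 N x] assms tail_sup_nonminf[of N x] by auto
  show "\<bar>f k x\<bar> \<noteq> \<infinity>" if "1 \<le> k"
    using f_le_tail_sup[of 0 k x] that assms f_nonminf[of k x] by auto
qed

text \<open>The constraints f 1, ..., f N followed by the supremum of all later ones: a finite
  system with the same feasible set as (P).\<close>

definition trunc_constr :: "nat \<Rightarrow> nat \<Rightarrow> 'a \<Rightarrow> ereal" where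
  "trunc_constr N i = (if i < N then f (Suc i) else tail_sup N)"

lemma convex_trunc_constr: "convex_pinf (trunc_constr N i)"
  unfolding trunc_constr_def using convex_f convex_tail_sup by simp

lemma trunc_constr_nonminf: "trunc_constr N i x \<noteq> -\<infinity>"
  unfolding trunc_constr_def using f_nonminf tail_sup_nonminf by simp

lemma trunc_constr_le: "(\<And>k. 1 \<le> k \<Longrightarrow> f k x \<le> b) \<Longrightarrow> trunc_constr N i x \<le> b"
  unfolding trunc_constr_def using tail_sup_le by simp

lemma trunc_constr_le_tail_sup: "K \<le> i \<Longrightarrow> i \<le> N \<Longrightarrow> trunc_constr N i x \<le> tail_sup K x"
  by (auto simp: trunc_constr_def intro: f_le_tail_sup tail_sup_antimono)

lemma trunc_constr_feasible:
  assumes "\<forall>i<Suc N. trunc_constr N i x \<le> 0"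
  shows "feasibleP f x"
  unfolding feasibleP_def
proof (intro allI impI)
  fix k :: nat assume "1 \<le> k"
  show "f k x \<le> 0"
  proof (cases "k \<le> N")
    case True
    then have "trunc_constr N (k - 1) x = f k x" using \<open>1 \<le> k\<close> True by (auto simp: trunc_constr_def)
    moreover have "k - 1 < Suc N" using True by simp
    ultimately show ?thesis using assms by metis
  next
    case False
    then have "f k x \<le> tail_sup N x" by (intro f_le_tail_sup) simp
    also have "\<dots> \<le> 0" using assms by (auto simp: trunc_constr_def dest!: spec[of _ N])
    finally show ?thesis .
  qed
qed

lemma truncated_multipliers:
  "\<exists>\<mu>. (\<forall>i. 0 \<le> \<mu> i) \<and>
     (\<forall>x. ereal optval \<le> f 0 x + (\<Sum>i<Suc N. emult (\<mu> i) (trunc_constr N i x)))"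
proof -
  obtain x0 \<delta> where x0: "f 0 x0 \<noteq> \<infinity>" "0 < \<delta>" "\<And>k. 1 \<le> k \<Longrightarrow> f k x0 \<le> ereal (- \<delta>)"
    using slater_point by blast
  have "trunc_constr N i x0 \<le> ereal (- \<delta>)" for i using x0(3) by (rule trunc_constr_le)
  moreover have "ereal (- \<delta>) < 0" using x0(2) by simp
  ultimately have "trunc_constr N i x0 < 0" for i by (meson order.strict_trans1)
  then show ?thesis
    using x0(1) optval_le trunc_constr_feasible
    by (intro lagrange_multipliers_finite convex_trunc_constr convex_f) auto
qed

lemma truncated_multipliers_bounded:
  "\<exists>M. \<forall>N \<mu>. (\<forall>i. 0 \<le> \<mu> i) \<longrightarrow>
     (\<forall>x. ereal optval \<le> f 0 x + (\<Sum>i<Suc N. emult (\<mu> i) (trunc_constr N i x))) \<longrightarrow>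
     (\<Sum>i<Suc N. \<mu> i) \<le> M"
proof -
  obtain x0 \<delta> where x0: "f 0 x0 \<noteq> \<infinity>" "0 < \<delta>" "\<And>k. 1 \<le> k \<Longrightarrow> f k x0 \<le> ereal (- \<delta>)"
    using slater_point by blast
  obtain a where a: "f 0 x0 = ereal a" using x0(1) f_nonminf[of 0 x0] by (cases "f 0 x0") auto
  \<comment> \<open>evaluate at the Slater point, where every truncated constraint is at most -\<delta>\<close>
  have "(\<Sum>i<Suc N. \<mu> i) \<le> (a - optval) / \<delta>"
    if \<mu>: "\<forall>i. 0 \<le> \<mu> i" "\<forall>x. ereal optval \<le> f 0 x + (\<Sum>i<Suc N. emult (\<mu> i) (trunc_constr N i x))"
    for N \<mu>
  proof -
    have "ereal optval \<le> ereal a + (\<Sum>i<Suc N. ereal (\<mu> i * - \<delta>))"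
      using \<mu>(2)[rule_format, of x0] unfolding a
    proof (rule order_trans, intro add_left_mono sum_mono emult_le_ereal)
      show "trunc_constr N i x0 \<le> ereal (- \<delta>)" for i using x0(3) by (rule trunc_constr_le)
    qed (use \<mu>(1) trunc_constr_nonminf in auto)
    also have "(\<Sum>i<Suc N. ereal (\<mu> i * - \<delta>)) = ereal ((\<Sum>i<Suc N. \<mu> i) * - \<delta>)"
      by (simp only: sum_ereal sum_distrib_right)
    finally have "optval \<le> a - (\<Sum>i<Suc N. \<mu> i) * \<delta>" by simp
    then show ?thesis using x0(2) by (simp add: field_simps)
  qed
  then show ?thesis by blast
qed

lemma truncated_inequality:
  assumes \<mu>: "\<forall>i. 0 \<le> \<mu> i" "\<forall>x. ereal optval \<le> f 0 x + (\<Sum>i<Suc N. emult (\<mu> i) (trunc_constr N i x))"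
    and "K \<le> N" and fin: "f 0 x \<noteq> \<infinity>" "tail_sup 0 x \<noteq> \<infinity>"
  shows "optval \<le> real_of_ereal (f 0 x) + (\<Sum>i<K. \<mu> i * real_of_ereal (f (Suc i) x))
           + (\<Sum>i\<in>{K..N}. \<mu> i) * real_of_ereal (tail_sup K x)"
proof -
  define a where "a i = real_of_ereal (trunc_constr N i x)" for i
  have a: "trunc_constr N i x = ereal (a i)" for i
    using finite_values[OF fin(2)] unfolding a_def trunc_constr_def by (simp add: ereal_real')
  have f0: "f 0 x = ereal (real_of_ereal (f 0 x))" using fin(1) f_nonminf[of 0 x] by (cases "f 0 x") auto
  have "optval \<le> real_of_ereal (f 0 x) + (\<Sum>i<Suc N. \<mu> i * a i)"
    using \<mu>(2)[rule_format, of x] by (subst (asm) f0) (simp add: a)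
  also have "(\<Sum>i<Suc N. \<mu> i * a i) \<le> (\<Sum>i<K. \<mu> i * a i) + (\<Sum>i\<in>{K..N}. \<mu> i) * real_of_ereal (tail_sup K x)"
  proof (rule sum_truncate_le)
    show "a i \<le> real_of_ereal (tail_sup K x)" if "K \<le> i" "i \<le> N" for i
      using trunc_constr_le_tail_sup[OF that, of x] finite_values[OF fin(2)] a[of i]
      by (simp add: ereal_le_real_iff ereal_real')
  qed (use \<mu>(1) \<open>K \<le> N\<close> in auto)
  also have "(\<Sum>i<K. \<mu> i * a i) = (\<Sum>i<K. \<mu> i * real_of_ereal (f (Suc i) x))"
    using \<open>K \<le> N\<close> by (intro sum.cong) (auto simp: a_def trunc_constr_def)
  finally show ?thesis by (simp add: add.assoc)
qed

subsection \<open>Weak duality and complementary slackness\<close>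

lemma LagD_xbar_le: "admD lam lami \<Longrightarrow> LagD f lam lami xbar \<le> f 0 xbar"
proof -
  assume adm: "admD lam lami"
  have "(\<Sum>k\<in>{1..n}. emult (lam k) (f k xbar)) \<le> 0" for n
    using adm feasible_xbar by (intro sum_nonpos emult_nonpos) (auto simp: admD_def)
  then have "limsup (\<lambda>n. \<Sum>k\<in>{1..n}. emult (lam k) (f k xbar)) \<le> 0"
    by (intro Limsup_bounded) auto
  moreover have "finf f xbar \<le> 0"
    unfolding finf_def using feasible_xbar by (intro Limsup_bounded) (auto intro: eventually_sequentiallyI[of 1])
  then have "emult lami (finf f xbar) \<le> 0" using adm by (intro emult_nonpos) (auto simp: admD_def)
  ultimately have "LagD f lam lami xbar \<le> f 0 xbar + 0 + 0"
    unfolding LagD_def by (intro add_mono order.refl)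
  then show ?thesis by simp
qed

lemma LagDm_xbar: "LagDm f m lam xbar = f 0 xbar + (\<Sum>k\<in>{1..m}. emult (lam k) (f k xbar))"
proof -
  have "(if m < k then emult (lam k) (max (f k xbar) 0) else 0) = 0" for k
    using feasible_xbar[of k] by (auto simp: emult_def max_def)
  then show ?thesis unfolding LagDm_def by simp
qed

lemma LagDm_xbar_le: "admDm lam \<Longrightarrow> LagDm f m lam xbar \<le> f 0 xbar"
proof -
  assume "admDm lam"
  then have "(\<Sum>k\<in>{1..m}. emult (lam k) (f k xbar)) \<le> 0"
    using feasible_xbar by (intro sum_nonpos emult_nonpos) (auto simp: admDm_def)
  then have "LagDm f m lam xbar \<le> f 0 xbar + 0"
    unfolding LagDm_xbar by (intro add_left_mono)
  then show ?thesis by simp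
qed

lemma complementary_slackness_D:
  assumes adm: "admD lam lami" and eq: "LagD f lam lami xbar = f 0 xbar"
  shows "(\<forall>k\<ge>1. emult (lam k) (f k xbar) = 0) \<and> emult lami (finf f xbar) = 0"
proof -
  define S where "S = limsup (\<lambda>n. \<Sum>k\<in>{1..n}. emult (lam k) (f k xbar))"
  define E where "E = emult lami (finf f xbar)"
  have t: "emult (lam k) (f k xbar) \<le> 0" if "1 \<le> k" for k
    using adm feasible_xbar[OF that] that by (intro emult_nonpos) (auto simp: admD_def)
  then have "S \<le> 0" unfolding S_def by (intro Limsup_bounded always_eventually allI sum_nonpos) auto
  moreover have "finf f xbar \<le> 0"
    unfolding finf_def using feasible_xbar by (intro Limsup_bounded) (auto intro: eventually_sequentiallyI[of 1])
  then have "E \<le> 0" unfolding E_def using adm by (intro emult_nonpos) (auto simp: admD_def)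
  moreover have "ereal optval + S + E = ereal optval"
    using eq unfolding LagD_def S_def E_def f0_xbar .
  ultimately have "S = 0" "E = 0" by (metis ereal_add_nonpos_eq_self)+
  have "emult (lam k) (f k xbar) = 0" if "1 \<le> k" for k
    using t \<open>S = 0\<close> that unfolding S_def
    by (rule limsup_partial_sums_nonpos_eq_0[where t = "\<lambda>k. emult (lam k) (f k xbar)"])
  then show ?thesis using \<open>E = 0\<close> unfolding E_def by blast
qed

lemma complementary_slackness_Dm:
  assumes adm: "admDm lam" and eq: "LagDm f m lam xbar = f 0 xbar"
  shows "\<forall>k\<in>{1..m}. emult (lam k) (f k xbar) = 0"
proof -
  have t: "emult (lam k) (f k xbar) \<le> 0" if "1 \<le> k" for k
    using adm feasible_xbar[OF that] that by (intro emult_nonpos) (auto simp: admDm_def)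
  then have "(\<Sum>k\<in>{1..m}. emult (lam k) (f k xbar)) \<le> 0" by (intro sum_nonpos) auto
  moreover have "ereal optval + (\<Sum>k\<in>{1..m}. emult (lam k) (f k xbar)) = ereal optval"
    using eq unfolding LagDm_xbar f0_xbar .
  ultimately have "(\<Sum>k\<in>{1..m}. emult (lam k) (f k xbar)) = 0"
    by (cases "\<Sum>k\<in>{1..m}. emult (lam k) (f k xbar)") auto
  then show ?thesis
    using t by (intro ballI ereal_sum_nonpos_eq_0[of "{1..m}" "\<lambda>k. emult (lam k) (f k xbar)"]) auto
qed

subsection \<open>The dual problem (D_m)\<close>

lemma emult_tail_sup_le_suminf:
  assumes "0 \<le> \<mu>" "\<mu> \<le> L" "0 < L"
  shows "emult \<mu> (tail_sup m x) \<le> (\<Sum>k. if m < k then emult L (max (f k x) 0) else 0)"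
proof -
  define Hp where "Hp = (SUP k\<in>{m<..}. max (f k x) 0)"
  have nonneg: "0 \<le> (if m < k then emult L (max (f k x) 0) else 0)" for k
    using assms by (simp add: emult_pos)
  have "tail_sup m x \<le> Hp" unfolding tail_sup_def Hp_def by (intro SUP_mono') auto
  moreover have "0 \<le> Hp" unfolding Hp_def by (rule order_trans[OF _ SUP_upper[of "Suc m"]]) auto
  ultimately have "emult \<mu> (tail_sup m x) \<le> ereal L * Hp" using assms by (intro emult_le_ereal_mult)
  also have "\<dots> = (SUP k\<in>{m<..}. ereal L * max (f k x) 0)"
    unfolding Hp_def using assms by (intro SUP_ereal_mult_left[symmetric]) auto
  also have "\<dots> \<le> (\<Sum>k. if m < k then emult L (max (f k x) 0) else 0)"
  proof (rule SUP_least)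
    fix k assume "k \<in> {m<..}"
    then have "ereal L * max (f k x) 0 = (\<Sum>j\<in>{k}. if m < j then emult L (max (f j x) 0) else 0)"
      using assms by (simp add: emult_pos)
    also have "\<dots> \<le> (\<Sum>j. if m < j then emult L (max (f j x) 0) else 0)"
      using nonneg by (intro sum_le_suminf summable_ereal_pos) auto
    finally show "ereal L * max (f k x) 0 \<le> (\<Sum>j. if m < j then emult L (max (f j x) 0) else 0)" .
  qed
  finally show ?thesis .
qed

lemma LagDm_lower_bound: "\<exists>lam. admDm lam \<and> (\<forall>x. ereal optval \<le> LagDm f m lam x)"
proof -
  obtain \<mu> where \<mu>: "\<forall>i. 0 \<le> \<mu> i"
    "\<forall>x. ereal optval \<le> f 0 x + (\<Sum>i<Suc m. emult (\<mu> i) (trunc_constr m i x))"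
    using truncated_multipliers by blast
  \<comment> \<open>every constraint beyond m gets the multiplier L, which dominates the multiplier of tail_sup m\<close>
  define L where "L = max (\<mu> m) 1"
  define lam where "lam k = (if k \<le> m then \<mu> (k - 1) else L)" for k
  have L: "0 < L" "\<mu> m \<le> L" by (simp_all add: L_def)
  have "admDm lam"
    unfolding admDm_def
  proof (intro conjI exI allI impI)
    show "0 \<le> lam k" for k using \<mu>(1) L by (simp add: lam_def)
    show "lam k \<le> (\<Sum>i<m. \<mu> i) + L" if "1 \<le> k" for k
    proof (cases "k \<le> m")
      case True
      then have "\<mu> (k - 1) \<le> (\<Sum>i<m. \<mu> i)" using that \<mu>(1) by (intro member_le_sum) auto
      then show ?thesis using True L by (simp add: lam_def)
    qed (use \<mu>(1) in \<open>simp add: lam_def sum_nonneg\<close>)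
  qed
  moreover have "ereal optval \<le> LagDm f m lam x" for x
  proof -
    have split: "(\<Sum>i<Suc m. emult (\<mu> i) (trunc_constr m i x))
        = (\<Sum>k\<in>{1..m}. emult (lam k) (f k x)) + emult (\<mu> m) (tail_sup m x)"
      by (simp add: sum.atLeast1_atMost_eq trunc_constr_def lam_def)
    have tail: "(\<lambda>k. if m < k then emult L (max (f k x) 0) else 0)
        = (\<lambda>k. if m < k then emult (lam k) (max (f k x) 0) else 0)"
      by (auto simp: lam_def)
    have "ereal optval \<le> f 0 x + ((\<Sum>k\<in>{1..m}. emult (lam k) (f k x)) + emult (\<mu> m) (tail_sup m x))"
      using \<mu>(2)[rule_format, of x] by (simp only: split)
    also have "\<dots> \<le> LagDm f m lam x"
      using emult_tail_sup_le_suminf[of "\<mu> m" L m x] \<mu>(1) L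
      unfolding LagDm_def tail add.assoc by (intro add_left_mono) auto
    finally show ?thesis .
  qed
  ultimately show ?thesis by blast
qed

lemma solutionDm_exists: "\<exists>lam. solutionDm f m lam \<and> f 0 xbar = dualDm f m lam"
proof -
  obtain lam where adm: "admDm lam" and lower: "\<And>x. ereal optval \<le> LagDm f m lam x"
    using LagDm_lower_bound by blast
  have weak: "dualDm f m mu \<le> f 0 xbar" if "admDm mu" for mu
    unfolding dualDm_def using LagDm_xbar_le[OF that] by (meson INF_lower UNIV_I order_trans)
  have "f 0 xbar \<le> dualDm f m lam" unfolding dualDm_def f0_xbar using lower by (rule INF_greatest)
  then have "dualDm f m lam = f 0 xbar" using weak[OF adm] by simp
  then show ?thesis using adm weak unfolding solutionDm_def by auto
qed

lemma solutionDm_optimality: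
  assumes sol: "solutionDm f m lam"
  shows "dualDm f m lam = LagDm f m lam xbar \<and> (\<forall>k\<in>{1..m}. emult (lam k) (f k xbar) = 0)"
proof -
  have adm: "admDm lam" using sol unfolding solutionDm_def by blast
  obtain lam0 where "solutionDm f m lam0" "f 0 xbar = dualDm f m lam0" using solutionDm_exists by blast
  then have "f 0 xbar \<le> dualDm f m lam" using sol unfolding solutionDm_def by auto
  moreover have "dualDm f m lam \<le> LagDm f m lam xbar" unfolding dualDm_def by (rule INF_lower) simp
  moreover note LagDm_xbar_le[OF adm, of m]
  ultimately have "dualDm f m lam = LagDm f m lam xbar" and eq: "LagDm f m lam xbar = f 0 xbar"
    by auto
  with complementary_slackness_Dm[OF adm eq] show ?thesis by simp
qed

subsection \<open>The dual problem (D)\<close>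

lemma limit_multipliers:
  obtains l where "\<And>k. 0 \<le> l k" "\<And>K. (\<Sum>i<K. l (Suc i)) \<le> l 0"
    "\<And>x K. f 0 x \<noteq> \<infinity> \<Longrightarrow> tail_sup 0 x \<noteq> \<infinity> \<Longrightarrow>
       optval \<le> real_of_ereal (f 0 x) + (\<Sum>i<K. l (Suc i) * real_of_ereal (f (Suc i) x))
         + (l 0 - (\<Sum>i<K. l (Suc i))) * real_of_ereal (tail_sup K x)"
proof -
  obtain \<mu> where \<mu>: "\<And>N. \<forall>i. 0 \<le> \<mu> N i"
    "\<And>N. \<forall>x. ereal optval \<le> f 0 x + (\<Sum>i<Suc N. emult (\<mu> N i) (trunc_constr N i x))"
    using truncated_multipliers by metis
  obtain M where M: "\<And>N. (\<Sum>i<Suc N. \<mu> N i) \<le> M"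
    using truncated_multipliers_bounded \<mu> by metis
  define w where "w N = mass_vector N (\<mu> N)" for N
  have "w N k \<in> {0..M}" for N k
    using mass_vector_bounds[of "\<mu> N" N k] \<mu>(1) M[of N] by (simp add: w_def)
  then obtain l r where r: "strict_mono r" and l: "\<And>k. l k \<in> {0..M}"
    and conv: "\<And>k. (\<lambda>j. w (r j) k) \<longlonglongrightarrow> l k"
    by (rule pointwise_convergent_subseq[of w "\<lambda>_. {0..M}"]) auto
  show ?thesis
  proof (rule that)
    show "0 \<le> l k" for k using l[of k] by simp
    show "(\<Sum>i<K. l (Suc i)) \<le> l 0" for K
    proof (rule LIMSEQ_le)
      show "(\<lambda>j. \<Sum>i<K. w (r j) (Suc i)) \<longlonglongrightarrow> (\<Sum>i<K. l (Suc i))" by (intro tendsto_sum conv)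
      show "(\<lambda>j. w (r j) 0) \<longlonglongrightarrow> l 0" by (rule conv)
    qed (use mass_vector_partial_le \<mu>(1) in \<open>auto simp: w_def\<close>)
    fix x K assume fin: "f 0 x \<noteq> \<infinity>" "tail_sup 0 x \<noteq> \<infinity>"
    let ?rhs = "\<lambda>w. real_of_ereal (f 0 x) + (\<Sum>i<K. w (Suc i) * real_of_ereal (f (Suc i) x))
      + (w 0 - (\<Sum>i<K. w (Suc i))) * real_of_ereal (tail_sup K x)"
    have "optval \<le> ?rhs (w N)" if "K \<le> N" for N
      using truncated_inequality[OF \<mu>(1)[of N] \<mu>(2)[of N] that fin] mass_vector_split[OF that, of "\<mu> N"]
      by (simp add: w_def)
    moreover have "\<forall>\<^sub>F j in sequentially. K \<le> r j"
      using r by (intro eventually_sequentiallyI[of K]) (meson le_trans seq_suble)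
    ultimately show "optval \<le> ?rhs l"
      by (intro LIMSEQ_le_const[of "\<lambda>j. ?rhs (w (r j))"] tendsto_intros conv)
        (auto simp: eventually_sequentially)
  qed
qed

lemma LagD_pinf:
  assumes lam: "\<And>k. 0 \<le> lam k" "0 \<le> lami" and inf: "f 0 x = \<infinity> \<or> tail_sup 0 x = \<infinity>"
  shows "LagD f lam lami x = \<infinity>"
proof -
  consider "f 0 x = \<infinity>" | k where "1 \<le> k" "f k x = \<infinity>"
    | "\<And>k. 1 \<le> k \<Longrightarrow> f k x \<noteq> \<infinity>" "tail_sup 0 x = \<infinity>"
    using inf by blast
  then show ?thesis
  proof cases
    case 1
    then show ?thesis by (simp add: LagD_def)
  next
    case (2 k)
    then have "\<forall>\<^sub>F n in sequentially. (\<Sum>j\<in>{1..n}. emult (lam j) (f j x)) = \<infinity>"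
      using lam by (intro eventually_sequentiallyI[of k]) (auto simp: sum_Pinfty emult_pinf intro!: bexI[of _ k])
    then have "limsup (\<lambda>n. \<Sum>j\<in>{1..n}. emult (lam j) (f j x)) = limsup (\<lambda>n. \<infinity>)"
      by (rule Limsup_eq)
    then have "limsup (\<lambda>n. \<Sum>j\<in>{1..n}. emult (lam j) (f j x)) = \<infinity>"
      by (simp add: Limsup_const)
    then show ?thesis using f_nonminf[of 0 x] by (simp add: LagD_def)
  next
    case 3
    then have "finf f x = \<infinity>" by (simp add: finf_eq_INF_tail_sup tail_sup_pinf)
    then show ?thesis using lam by (simp add: LagD_def emult_pinf)
  qed
qed

lemma limsup_scaled_tail_sup:
  assumes "0 \<le> lami" "tail_sup 0 x \<noteq> \<infinity>"
  shows "limsup (\<lambda>N. ereal lami * tail_sup N x) = emult lami (finf f x)"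
proof (cases "lami = 0")
  case True
  \<comment> \<open>ereal 0 * \<infinity> = 0 but emult 0 \<infinity> = \<infinity>, so finf f x must be finite here\<close>
  have "finf f x \<le> tail_sup 0 x" unfolding finf_eq_INF_tail_sup by (rule INF_lower) simp
  then have "finf f x \<noteq> \<infinity>" using assms(2) by auto
  then show ?thesis using True by (simp add: emult_def Limsup_const zero_ereal_def[symmetric])
next
  case False
  then have "(\<lambda>N. ereal lami * tail_sup N x) \<longlonglongrightarrow> ereal lami * finf f x"
    using assms(1) by (intro tendsto_cmult_ereal tail_sup_tendsto_finf) auto
  then show ?thesis using False assms(1) by (simp add: lim_imp_Limsup emult_pos)
qed

lemma LagD_lower_bound_finite:
  assumes lam: "\<And>k. 0 \<le> lam k" "lam 0 = 0" "summable lam" and lami: "0 \<le> lami"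
    and fin: "f 0 x \<noteq> \<infinity>" "tail_sup 0 x \<noteq> \<infinity>"
    and ineq: "\<And>K. optval \<le> real_of_ereal (f 0 x) + (\<Sum>k\<in>{1..K}. lam k * real_of_ereal (f k x))
      + (lami + (suminf lam - (\<Sum>k\<in>{1..K}. lam k))) * real_of_ereal (tail_sup K x)"
  shows "ereal optval \<le> LagD f lam lami x"
proof -
  define a where "a k = real_of_ereal (f k x)" for k
  define b where "b N = real_of_ereal (tail_sup N x)" for N
  have f_eq: "f k x = ereal (a k)" if "1 \<le> k" for k
    using finite_values(2)[OF fin(2) that] by (simp add: a_def ereal_real')
  have f0_eq: "f 0 x = ereal (a 0)" using fin(1) f_nonminf[of 0 x] by (cases "f 0 x") (auto simp: a_def)
  have b_eq: "tail_sup N x = ereal (b N)" for N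
    using finite_values(1)[OF fin(2)] by (simp add: b_def ereal_real')
  have "ereal (optval - a 0)
      \<le> limsup (\<lambda>K. ereal (\<Sum>k\<in>{1..K}. lam k * a k)) + limsup (\<lambda>K. ereal (lami * b K))"
  proof (rule limsup_lower_bound_tail[OF lam])
    show "b K \<le> b 0" for K using tail_sup_antimono[of 0 K x] by (simp add: b_eq)
    show "optval - a 0 \<le> (\<Sum>k\<in>{1..K}. lam k * a k) + (lami + (suminf lam - (\<Sum>k\<in>{1..K}. lam k))) * b K"
      for K using ineq[of K] unfolding a_def b_def by linarith
  qed
  also have "(\<lambda>K. ereal (\<Sum>k\<in>{1..K}. lam k * a k)) = (\<lambda>K. \<Sum>k\<in>{1..K}. emult (lam k) (f k x))"
    by (simp add: f_eq)
  also have "(\<lambda>K. ereal (lami * b K)) = (\<lambda>K. ereal lami * tail_sup K x)"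
    by (simp add: b_eq)
  also have "limsup \<dots> = emult lami (finf f x)"
    using lami fin(2) by (rule limsup_scaled_tail_sup)
  finally have "ereal (a 0) + ereal (optval - a 0)
      \<le> f 0 x + (limsup (\<lambda>K. \<Sum>k\<in>{1..K}. emult (lam k) (f k x)) + emult lami (finf f x))"
    unfolding f0_eq by (rule add_left_mono)
  then show ?thesis by (simp add: LagD_def add.assoc)
qed

lemma LagD_lower_bound: "\<exists>lam lami. admD lam lami \<and> (\<forall>x. ereal optval \<le> LagD f lam lami x)"
proof -
  obtain l where l_nonneg: "\<And>k. 0 \<le> l k" and l_partial: "\<And>K. (\<Sum>i<K. l (Suc i)) \<le> l 0"
    and l_ineq: "\<And>x K. f 0 x \<noteq> \<infinity> \<Longrightarrow> tail_sup 0 x \<noteq> \<infinity> \<Longrightarrow>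
       optval \<le> real_of_ereal (f 0 x) + (\<Sum>i<K. l (Suc i) * real_of_ereal (f (Suc i) x))
         + (l 0 - (\<Sum>i<K. l (Suc i))) * real_of_ereal (tail_sup K x)"
    by (rule limit_multipliers) blast
  \<comment> \<open>the part of the mass l 0 not carried by the series of multipliers becomes the multiplier of finf\<close>
  define lam where "lam k = (if k = 0 then 0 else l k)" for k
  have lam_nonneg: "0 \<le> lam k" for k using l_nonneg by (simp add: lam_def)
  have lam_partial: "(\<Sum>k\<in>{1..K}. lam k * c k) = (\<Sum>i<K. l (Suc i) * c (Suc i))" for K c
    by (simp add: lam_def sum.atLeast1_atMost_eq)
  have lam_le: "(\<Sum>k<K. lam k) \<le> l 0" for K
  proof -
    have "(\<Sum>k<K. lam k) \<le> (\<Sum>k<Suc K. lam k)" using lam_nonneg by simp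
    also have "\<dots> = (\<Sum>i<K. l (Suc i))" by (simp only: sum.lessThan_Suc_shift) (simp add: lam_def)
    finally show ?thesis using l_partial[of K] by simp
  qed
  have summable: "summable lam" using lam_nonneg lam_le by (rule summableI_nonneg_bounded)
  define lami where "lami = l 0 - suminf lam"
  have lami_nonneg: "0 \<le> lami" using suminf_le_const[OF summable lam_le] by (simp add: lami_def)
  have "ereal optval \<le> LagD f lam lami x" for x
  proof (cases "f 0 x = \<infinity> \<or> tail_sup 0 x = \<infinity>")
    case True
    then show ?thesis using LagD_pinf[OF lam_nonneg lami_nonneg] by simp
  next
    case False
    then have fin: "f 0 x \<noteq> \<infinity>" "tail_sup 0 x \<noteq> \<infinity>" by auto
    show ?thesis
    proof (rule LagD_lower_bound_finite[OF lam_nonneg _ summable lami_nonneg fin])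
      show "optval \<le> real_of_ereal (f 0 x) + (\<Sum>k\<in>{1..K}. lam k * real_of_ereal (f k x))
        + (lami + (suminf lam - (\<Sum>k\<in>{1..K}. lam k))) * real_of_ereal (tail_sup K x)" for K
        using l_ineq[OF fin, of K] lam_partial[where c = "\<lambda>k. real_of_ereal (f k x)"]
          lam_partial[where c = "\<lambda>_. 1"]
        by (simp add: lami_def)
    qed (simp add: lam_def)
  qed
  moreover have "admD lam lami" using lam_nonneg summable lami_nonneg by (simp add: admD_def)
  ultimately show ?thesis by blast
qed

lemma solutionD_exists: "\<exists>lam lami. solutionD f lam lami \<and> f 0 xbar = dualD f lam lami"
proof -
  obtain lam lami where adm: "admD lam lami" and lower: "\<And>x. ereal optval \<le> LagD f lam lami x"
    using LagD_lower_bound by blast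
  have weak: "dualD f mu mui \<le> f 0 xbar" if "admD mu mui" for mu mui
    unfolding dualD_def using LagD_xbar_le[OF that] by (meson INF_lower UNIV_I order_trans)
  have "f 0 xbar \<le> dualD f lam lami" unfolding dualD_def f0_xbar using lower by (rule INF_greatest)
  then have dual_value: "dualD f lam lami = f 0 xbar" using weak[OF adm] by simp
  then have "solutionD f lam lami" using adm weak by (simp add: solutionD_def)
  with dual_value show ?thesis by (intro exI[of _ lam] exI[of _ lami]) simp
qed

lemma solutionD_optimality:
  assumes sol: "solutionD f lam lami"
  shows "dualD f lam lami = LagD f lam lami xbar \<and>
    (\<forall>k\<ge>1. emult (lam k) (f k xbar) = 0) \<and> emult lami (finf f xbar) = 0"
proof -
  have adm: "admD lam lami" using sol unfolding solutionD_def by blast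
  obtain lam0 lami0 where "solutionD f lam0 lami0" "f 0 xbar = dualD f lam0 lami0"
    using solutionD_exists by blast
  then have "f 0 xbar \<le> dualD f lam lami" using sol unfolding solutionD_def by auto
  moreover have "dualD f lam lami \<le> LagD f lam lami xbar" unfolding dualD_def by (rule INF_lower) simp
  moreover note LagD_xbar_le[OF adm]
  ultimately have "dualD f lam lami = LagD f lam lami xbar" and eq: "LagD f lam lami xbar = f 0 xbar"
    by auto
  with complementary_slackness_D[OF adm eq] show ?thesis by simp
qed

end

theorem corollary3p5:
  fixes f :: "nat \<Rightarrow> 'a::banach \<Rightarrow> ereal" and xbar :: 'a
  assumes pc: "\<And>k. proper_convex (f k)"
    and C_ne: "edom (f 0) \<inter> {x. \<forall>k\<ge>1. f k x \<le> 0} \<noteq> {}"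
    and sol: "solutionP f xbar"
    and slater: "\<exists>x\<in>edom (f 0). (SUP k\<in>{1..}. f k x) < 0"
  shows "((\<exists>lam lami. solutionD f lam lami \<and> f 0 xbar = dualD f lam lami) \<and>
          (\<forall>lam lami. solutionD f lam lami \<longrightarrow>
             dualD f lam lami = LagD f lam lami xbar \<and>
             (\<forall>k\<ge>1. emult (lam k) (f k xbar) = 0) \<and>
             emult lami (finf f xbar) = 0))
       \<and> (\<forall>m::nat.
          (\<exists>lam. solutionDm f m lam \<and> f 0 xbar = dualDm f m lam) \<and>
          (\<forall>lam. solutionDm f m lam \<longrightarrow>
             dualDm f m lam = LagDm f m lam xbar \<and>
             (\<forall>k\<in>{1..m}. emult (lam k) (f k xbar) = 0)))"
proof -
  interpret slater_program f xbar
    using pc sol slater by unfold_locales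
  show ?thesis
    using solutionD_exists solutionD_optimality solutionDm_exists solutionDm_optimality by blast
qed

end
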